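(* Let $\mathcal{M}=(S,A,\delta)$ be a finite fuzzy transition system and $\gamma\in(0,1)$. For any functions $d,d':S\times S\to[0,1]$, \[\|\Delta(d)-\Delta(d')\|\le\gamma\cdot\|d-d'\|,\] where $\|e\|=\max_{s,t\in S}|e(s,t)|$.
   Context: A fuzzy set on a finite set $X$ is a map $\mu:X\to[0,1]$; $\mathcal{F}(X)$ is the set of fuzzy sets on $X$; $\mu(U)=\max_{x\in U}\mu(x)$. A fuzzy transition system is $\mathcal{M}=(S,A,\delta)$ with $S,A$ finite and $\delta:S\times A\to\mathcal{P}(\mathcal{F}(S))$, each $\delta(s,a)$ finite. For $d:S\times S\to[0,1]$, the lifting is: $\hat d(\mu,\eta)=1$ if $\mu(S)\ne\eta(S)$, and otherwise $\hat d(\mu,\eta)$ is the minimum of $\max_{u,v}\min(d(u,v),x_{uv})$ over $x_{uv}\ge0$ with $\max_v x_{uv}=\mu(u)$ for all $u$ and $\max_u x_{uv}=\eta(v)$ for all $v$. For finite $Z\subseteq\mathcal{F}(S)$: $\hat d(\mu,Z)=\min_{\eta\in Z}\hat d(\mu,\eta)$ if $Z\ne\emptyset$, else $1$. Hausdorff distance: $H_{\hat d}(\emptyset,\emptyset)=0$, otherwise $H_{\hat d}(Y,Z)=\max(\max_{\mu\in Y}\hat d(\mu,Z),\max_{\eta\in Z}\hat d(\eta,Y))$. With discounting factor $\gamma$, $\Delta(d)(s,t)=\gamma\cdot\max_{a\in A}H_{\hat d}(\delta(s,a),\delta(t,a))$. *)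

theory Defs
  imports Complex_Main
begin

definition fuzzy_set :: "('s \<Rightarrow> real) \<Rightarrow> bool" where
  "fuzzy_set \<mu> \<longleftrightarrow> (\<forall>x. 0 \<le> \<mu> x \<and> \<mu> x \<le> 1)"

definition fmax :: "('s::finite \<Rightarrow> real) \<Rightarrow> real" where
  "fmax \<mu> = Max (range \<mu>)"

definition coupling :: "('s::finite \<Rightarrow> real) \<Rightarrow> ('s \<Rightarrow> real) \<Rightarrow> ('s \<Rightarrow> 's \<Rightarrow> real) \<Rightarrow> bool" where
  "coupling \<mu> \<eta> x \<longleftrightarrow> (\<forall>u v. 0 \<le> x u v)
     \<and> (\<forall>u. Max (range (\<lambda>v. x u v)) = \<mu> u)
     \<and> (\<forall>v. Max (range (\<lambda>u. x u v)) = \<eta> v)"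

text \<open>Lifting of d to fuzzy sets; the minimum is written as an infimum
  (it is attained by compactness).\<close>
definition lift :: "('s::finite \<Rightarrow> 's \<Rightarrow> real) \<Rightarrow> ('s \<Rightarrow> real) \<Rightarrow> ('s \<Rightarrow> real) \<Rightarrow> real" where
  "lift d \<mu> \<eta> = (if fmax \<mu> \<noteq> fmax \<eta> then 1
     else Inf {Max (range (\<lambda>(u,v). min (d u v) (x u v))) | x. coupling \<mu> \<eta> x})"

definition lift_set :: "('s::finite \<Rightarrow> 's \<Rightarrow> real) \<Rightarrow> ('s \<Rightarrow> real) \<Rightarrow> ('s \<Rightarrow> real) set \<Rightarrow> real" where
  "lift_set d \<mu> Z = (if Z = {} then 1 else Min ((\<lambda>\<eta>. lift d \<mu> \<eta>) ` Z))"

definition maxset :: "real set \<Rightarrow> real" where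
  "maxset A = (if A = {} then 0 else Max A)"

definition hausdorff :: "('s::finite \<Rightarrow> 's \<Rightarrow> real) \<Rightarrow> ('s \<Rightarrow> real) set \<Rightarrow> ('s \<Rightarrow> real) set \<Rightarrow> real" where
  "hausdorff d Y Z = (if Y = {} \<and> Z = {} then 0
     else max (maxset ((\<lambda>\<mu>. lift_set d \<mu> Z) ` Y)) (maxset ((\<lambda>\<eta>. lift_set d \<eta> Y) ` Z)))"

definition Delta :: "real \<Rightarrow> ('s::finite \<Rightarrow> 'a::finite \<Rightarrow> ('s \<Rightarrow> real) set)
    \<Rightarrow> ('s \<Rightarrow> 's \<Rightarrow> real) \<Rightarrow> 's \<Rightarrow> 's \<Rightarrow> real" where
  "Delta \<gamma> \<delta> d s t = \<gamma> * Max (range (\<lambda>a. hausdorff d (\<delta> s a) (\<delta> t a)))"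

definition supnorm :: "('s::finite \<Rightarrow> 's \<Rightarrow> real) \<Rightarrow> real" where
  "supnorm e = Max (range (\<lambda>(s,t). \<bar>e s t\<bar>))"

end

theory Submission
  imports Defs
begin

text \<open>Every operation in the chain \<open>d \<mapsto> lift d \<mapsto> lift_set d \<mapsto> hausdorff d \<mapsto> Delta\<close>
  is built from maxima, minima and infima of expressions in which \<open>d\<close> enters through
  \<open>min (d u v) (x u v)\<close>. Each of these operations changes by at most \<open>c\<close> when its
  arguments change pointwise by at most \<open>c\<close>, so every stage is 1-Lipschitz for the
  sup-norm; the final factor \<open>\<gamma>\<close> gives the contraction.\<close>

lemma Max_image_le_Max_image_add:
  fixes f g :: "'a \<Rightarrow> real"
  assumes "finite A" "A \<noteq> {}" "\<And>x. x \<in> A \<Longrightarrow> f x \<le> g x + c"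
  shows "Max (f ` A) \<le> Max (g ` A) + c"
proof -
  have "f x \<le> Max (g ` A) + c" if "x \<in> A" for x
    using assms(3)[OF that] Max_ge[OF finite_imageI[OF assms(1)] imageI[OF that], of g]
    by linarith
  then show ?thesis
    using assms(1,2) by (simp add: Max_le_iff)
qed

lemma abs_Max_image_diff_le:
  fixes f g :: "'a \<Rightarrow> real"
  assumes "finite A" "A \<noteq> {}" "\<And>x. x \<in> A \<Longrightarrow> \<bar>f x - g x\<bar> \<le> c"
  shows "\<bar>Max (f ` A) - Max (g ` A)\<bar> \<le> c"
proof -
  have fg: "f x \<le> g x + c" and gf: "g x \<le> f x + c" if "x \<in> A" for x
    using assms(3)[OF that] by linarith+
  have "Max (f ` A) \<le> Max (g ` A) + c"
    by (rule Max_image_le_Max_image_add) (rule assms(1,2) fg)+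
  moreover have "Max (g ` A) \<le> Max (f ` A) + c"
    by (rule Max_image_le_Max_image_add) (rule assms(1,2) gf)+
  ultimately show ?thesis by linarith
qed

lemma Min_image_le_Min_image_add:
  fixes f g :: "'a \<Rightarrow> real"
  assumes "finite A" "A \<noteq> {}" "\<And>x. x \<in> A \<Longrightarrow> f x \<le> g x + c"
  shows "Min (f ` A) \<le> Min (g ` A) + c"
proof -
  have "Min (g ` A) \<in> g ` A"
    using assms(1,2) by simp
  then obtain b where "b \<in> A" "Min (g ` A) = g b"
    by blast
  moreover have "Min (f ` A) \<le> f b"
    using \<open>b \<in> A\<close> assms(1) by simp
  ultimately show ?thesis
    using assms(3)[OF \<open>b \<in> A\<close>] by linarith
qed

lemma abs_Min_image_diff_le:
  fixes f g :: "'a \<Rightarrow> real"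
  assumes "finite A" "A \<noteq> {}" "\<And>x. x \<in> A \<Longrightarrow> \<bar>f x - g x\<bar> \<le> c"
  shows "\<bar>Min (f ` A) - Min (g ` A)\<bar> \<le> c"
proof -
  have fg: "f x \<le> g x + c" and gf: "g x \<le> f x + c" if "x \<in> A" for x
    using assms(3)[OF that] by linarith+
  have "Min (f ` A) \<le> Min (g ` A) + c"
    by (rule Min_image_le_Min_image_add) (rule assms(1,2) fg)+
  moreover have "Min (g ` A) \<le> Min (f ` A) + c"
    by (rule Min_image_le_Min_image_add) (rule assms(1,2) gf)+
  ultimately show ?thesis by linarith
qed

lemma Inf_image_le_Inf_image_add:
  fixes f g :: "'a \<Rightarrow> real"
  assumes "S \<noteq> {}" "bdd_below (f ` S)" "\<And>x. x \<in> S \<Longrightarrow> f x \<le> g x + c"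
  shows "Inf (f ` S) \<le> Inf (g ` S) + c"
proof -
  have "Inf (f ` S) - c \<le> Inf (g ` S)"
  proof (rule cInf_greatest)
    show "g ` S \<noteq> {}" using assms(1) by simp
  next
    fix y assume "y \<in> g ` S"
    then obtain x where "x \<in> S" "y = g x" by blast
    moreover have "Inf (f ` S) \<le> f x"
      using cInf_lower[OF imageI[OF \<open>x \<in> S\<close>] assms(2)] .
    ultimately show "Inf (f ` S) - c \<le> y"
      using assms(3)[OF \<open>x \<in> S\<close>] by linarith
  qed
  then show ?thesis by simp
qed

lemma abs_Inf_image_diff_le:
  fixes f g :: "'a \<Rightarrow> real"
  assumes "bdd_below (f ` S)" "bdd_below (g ` S)" "0 \<le> c"
    and "\<And>x. x \<in> S \<Longrightarrow> \<bar>f x - g x\<bar> \<le> c"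
  shows "\<bar>Inf (f ` S) - Inf (g ` S)\<bar> \<le> c"
proof (cases "S = {}")
  case False
  have fg: "f x \<le> g x + c" and gf: "g x \<le> f x + c" if "x \<in> S" for x
    using assms(4)[OF that] by linarith+
  have "Inf (f ` S) \<le> Inf (g ` S) + c"
    by (rule Inf_image_le_Inf_image_add) (rule False assms(1,2) fg)+
  moreover have "Inf (g ` S) \<le> Inf (f ` S) + c"
    by (rule Inf_image_le_Inf_image_add) (rule False assms(1,2) gf)+
  ultimately show ?thesis by linarith
qed (use assms(3) in simp)

lemma abs_le_supnorm: "\<bar>e s t\<bar> \<le> supnorm (e :: 's::finite \<Rightarrow> 's \<Rightarrow> real)"
  unfolding supnorm_def by (rule Max_ge) auto

lemma supnorm_nonneg: "0 \<le> supnorm (e :: 's::finite \<Rightarrow> 's \<Rightarrow> real)"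
  using abs_le_supnorm[of e] abs_ge_zero order_trans by blast

lemma supnorm_le:
  fixes e :: "'s::finite \<Rightarrow> 's \<Rightarrow> real"
  assumes "\<And>s t. \<bar>e s t\<bar> \<le> c"
  shows "supnorm e \<le> c"
  unfolding supnorm_def using assms by (auto intro!: Max.boundedI)

lemma lift_lipschitz:
  fixes d d' :: "'s::finite \<Rightarrow> 's \<Rightarrow> real"
  shows "\<bar>lift d \<mu> \<eta> - lift d' \<mu> \<eta>\<bar> \<le> supnorm (\<lambda>s t. d s t - d' s t)"
proof (cases "fmax \<mu> = fmax \<eta>")
  case True
  let ?c = "supnorm (\<lambda>s t. d s t - d' s t)"
  let ?S = "{x. coupling \<mu> \<eta> x}"
  define cost where "cost e x = Max (range (\<lambda>(u, v). min (e u v) (x u v)))"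
    for e x :: "'s \<Rightarrow> 's \<Rightarrow> real"
  have cost_ge: "min (e u v) (x u v) \<le> cost e x" for e x u v
    unfolding cost_def by (rule Max_ge) (auto intro: image_eqI[of _ _ "(u, v)"])
  \<comment> \<open>Couplings are nonnegative, so every cost is at least \<open>min (e u v) 0\<close>.\<close>
  have bdd: "bdd_below (cost e ` ?S)" for e
  proof (rule bdd_belowI2)
    fix x assume "x \<in> ?S"
    then have "min (e undefined undefined) 0 \<le> min (e undefined undefined) (x undefined undefined)"
      by (simp add: coupling_def min.coboundedI2)
    then show "min (e undefined undefined) 0 \<le> cost e x"
      using cost_ge order_trans by blast
  qed
  have "\<bar>cost d x - cost d' x\<bar> \<le> ?c" for x
    unfolding cost_def
  proof (rule abs_Max_image_diff_le, simp_all, clarify)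
    fix u v
    show "\<bar>min (d u v) (x u v) - min (d' u v) (x u v)\<bar> \<le> ?c"
      using abs_le_supnorm[of "\<lambda>s t. d s t - d' s t" u v] by (simp add: min_def) linarith
  qed
  then have "\<bar>Inf (cost d ` ?S) - Inf (cost d' ` ?S)\<bar> \<le> ?c"
    by (intro abs_Inf_image_diff_le bdd supnorm_nonneg)
  moreover have "lift e \<mu> \<eta> = Inf (cost e ` ?S)" for e
    using True by (auto simp: lift_def cost_def intro!: arg_cong[where f = Inf])
  ultimately show ?thesis by simp
qed (simp add: lift_def supnorm_nonneg)

lemma lift_set_lipschitz:
  fixes d d' :: "'s::finite \<Rightarrow> 's \<Rightarrow> real"
  assumes "finite Z"
  shows "\<bar>lift_set d \<mu> Z - lift_set d' \<mu> Z\<bar> \<le> supnorm (\<lambda>s t. d s t - d' s t)"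
  unfolding lift_set_def using assms
  by (auto intro!: abs_Min_image_diff_le lift_lipschitz simp: supnorm_nonneg)

lemma abs_maxset_image_diff_le:
  fixes f g :: "'a \<Rightarrow> real"
  assumes "finite A" "0 \<le> c" "\<And>x. x \<in> A \<Longrightarrow> \<bar>f x - g x\<bar> \<le> c"
  shows "\<bar>maxset (f ` A) - maxset (g ` A)\<bar> \<le> c"
  unfolding maxset_def using assms by (auto intro!: abs_Max_image_diff_le)

lemma hausdorff_lipschitz:
  fixes d d' :: "'s::finite \<Rightarrow> 's \<Rightarrow> real"
  assumes "finite Y" "finite Z"
  shows "\<bar>hausdorff d Y Z - hausdorff d' Y Z\<bar> \<le> supnorm (\<lambda>s t. d s t - d' s t)"
proof -
  let ?c = "supnorm (\<lambda>s t. d s t - d' s t)"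
  have "\<bar>maxset ((\<lambda>\<mu>. lift_set d \<mu> Z) ` Y) - maxset ((\<lambda>\<mu>. lift_set d' \<mu> Z) ` Y)\<bar> \<le> ?c"
    "\<bar>maxset ((\<lambda>\<eta>. lift_set d \<eta> Y) ` Z) - maxset ((\<lambda>\<eta>. lift_set d' \<eta> Y) ` Z)\<bar> \<le> ?c"
    using assms by (auto intro!: abs_maxset_image_diff_le lift_set_lipschitz supnorm_nonneg)
  then show ?thesis
    unfolding hausdorff_def using supnorm_nonneg[of "\<lambda>s t. d s t - d' s t"]
    by (simp add: max_def) linarith
qed

lemma abs_Delta_diff_le:
  fixes \<delta> :: "'s::finite \<Rightarrow> 'a::finite \<Rightarrow> ('s \<Rightarrow> real) set"
    and d d' :: "'s \<Rightarrow> 's \<Rightarrow> real"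
  assumes "\<And>s a. finite (\<delta> s a)" "0 \<le> \<gamma>"
  shows "\<bar>Delta \<gamma> \<delta> d s t - Delta \<gamma> \<delta> d' s t\<bar> \<le> \<gamma> * supnorm (\<lambda>s t. d s t - d' s t)"
proof -
  have "\<bar>Max (range (\<lambda>a. hausdorff d (\<delta> s a) (\<delta> t a)))
         - Max (range (\<lambda>a. hausdorff d' (\<delta> s a) (\<delta> t a)))\<bar>
        \<le> supnorm (\<lambda>s t. d s t - d' s t)"
    using assms(1) by (auto intro!: abs_Max_image_diff_le hausdorff_lipschitz)
  then show ?thesis
    unfolding Delta_def using assms(2)
    by (simp add: abs_mult right_diff_distrib[symmetric] mult_left_mono)
qed

theorem lemma6:
  fixes \<delta> :: "'s::finite \<Rightarrow> 'a::finite \<Rightarrow> ('s \<Rightarrow> real) set"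
    and \<gamma> :: real and d d' :: "'s \<Rightarrow> 's \<Rightarrow> real"
  assumes "\<And>s a. finite (\<delta> s a)"
    and "\<And>s a \<mu>. \<mu> \<in> \<delta> s a \<Longrightarrow> fuzzy_set \<mu>"
    and "0 < \<gamma>" and "\<gamma> < 1"
    and "\<And>s t. 0 \<le> d s t \<and> d s t \<le> 1"
    and "\<And>s t. 0 \<le> d' s t \<and> d' s t \<le> 1"
  shows "supnorm (\<lambda>s t. Delta \<gamma> \<delta> d s t - Delta \<gamma> \<delta> d' s t)
           \<le> \<gamma> * supnorm (\<lambda>s t. d s t - d' s t)"
  using assms(1,3) by (intro supnorm_le abs_Delta_diff_le) simp_all

end
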